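(* In the altruistic controlled social learning model described in the context, the optimal value function $V^*_A:[0,1]\to\mathbb{R}$ is convex in the public belief $b$.
   Context: A binary state $\omega\in\{G,B\}$ is drawn once with $\mathbb{P}(\omega=G)=b_1$. Agents $i=1,2,\dots$ act in sequence. Before agent $i$ acts, a planner chooses a signal precision $q_i\in[0.5,1]$; agent $i$ receives a private signal $s_i\in\{G,B\}$ with $\mathbb{P}(s_i=\omega)=q_i$, conditionally independent of all other signals and of the history given $\omega$. Let $y(b,q)=1+2bq-b-q$ (probability of signal $G$ at public belief $b$) and $z(b,q)=b+q-2bq=1-y(b,q)$. Agent $i$, with public belief $b_i$, takes action $a_i=s_i$ if $1-q_i\le b_i\le q_i$, $a_i=G$ if $b_i>q_i$, $a_i=B$ if $b_i<1-q_i$. The public belief evolves by $b_{i+1}=\frac{q_ib_i}{y(b_i,q_i)}$ if $s_i=G$ and $b_{i+1}=\frac{(1-q_i)b_i}{z(b_i,q_i)}$ if $s_i=B$ when $1-q_i\le b_i\le q_i$, and $b_{i+1}=b_i$ otherwise. Cost of an incorrect action is $C>0$. The altruistic planner has baseline precision $p\in[0.5,1)$ and a cost function $\beta:[0.5,1]\to[0,\infty)$ that is non-negative, increasing, continuous and concave with $\beta(p)=0$; its instantaneous reward is $r_A(b,q)=-\beta(q)-C\min(b,1-b,1-q)$ (the second term being $-C$ times the probability that $a_i\ne\omega$). Policies are deterministic Markov maps $\pi:[0,1]\to[0.5,1]$ with $q_i=\pi(b_i)$. For a discount factor $\delta\in[0,1)$, $V^\pi_A(b)=\mathbb{E}\big[\sum_{i\ge1}\delta^{i-1}r_A(b_i,\pi(b_i))\mid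 b_1=b\big]$ and $V^*_A(b)=\sup_\pi V^\pi_A(b)$. *)

theory Defs
  imports "HOL-Analysis.Analysis" "HOL-Probability.Probability"
begin

(* probability of signal G at public belief b with precision q *)
definition sig_y :: "real \<Rightarrow> real \<Rightarrow> real" where
  "sig_y b q = 1 + 2*b*q - b - q"

definition sig_z :: "real \<Rightarrow> real \<Rightarrow> real" where
  "sig_z b q = b + q - 2*b*q"

definition belief_step :: "real \<Rightarrow> real \<Rightarrow> real pmf" where
  "belief_step b q =
     (if 1 - q \<le> b \<and> b \<le> q
      then map_pmf (\<lambda>s. if s then q * b / sig_y b q else (1 - q) * b / sig_z b q)
                   (bernoulli_pmf (sig_y b q))
      else return_pmf b)"

(* distribution of b_{n+1} given b_1 = b under Markov policy pol *)
fun belief_dist :: "(real \<Rightarrow> real) \<Rightarrow> real \<Rightarrow> nat \<Rightarrow> real pmf" where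
  "belief_dist pol b 0 = return_pmf b"
| "belief_dist pol b (Suc n) = bind_pmf (belief_dist pol b n) (\<lambda>x. belief_step x (pol x))"

definition r_A :: "(real \<Rightarrow> real) \<Rightarrow> real \<Rightarrow> real \<Rightarrow> real \<Rightarrow> real" where
  "r_A \<beta> C b q = - \<beta> q - C * min b (min (1 - b) (1 - q))"

definition policies :: "(real \<Rightarrow> real) set" where
  "policies = {pol. \<forall>b\<in>{0..1}. pol b \<in> {1/2..1}}"

definition V_pol :: "(real \<Rightarrow> real) \<Rightarrow> real \<Rightarrow> real \<Rightarrow> (real \<Rightarrow> real) \<Rightarrow> real \<Rightarrow> real" where
  "V_pol \<beta> C \<delta> pol b =
     (\<Sum>n. \<delta> ^ n * measure_pmf.expectation (belief_dist pol b n) (\<lambda>x. r_A \<beta> C x (pol x)))"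

definition V_opt :: "(real \<Rightarrow> real) \<Rightarrow> real \<Rightarrow> real \<Rightarrow> real \<Rightarrow> real" where
  "V_opt \<beta> C \<delta> b = (SUP pol\<in>policies. V_pol \<beta> C \<delta> pol b)"

end

theory Submission
  imports Defs
begin

(*
  Value iteration V_0 = 0, V_{n+1} = T V_n with the Bellman operator T converges to V*_A:
  rewards are nonpositive, so every policy is worth at most V_n, while a policy that is
  epsilon-greedy for V_n is worth at least V_n - (epsilon + delta^n K) / (1 - delta), where
  K = (beta 1 + C) / (1 - delta) bounds |V_n|. Hence it suffices that T preserves convexity.

  When the agent follows her signal (1 - q <= b <= q), the continuation value
  y V(qb / y) + z V((1-q)b / z) is a sum of two perspectives (u + w) V(u / (u + w)) of V
  taken at arguments affine in b and, separately, in q; so it is convex in b and in q.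
  Otherwise she herds and the value is at most -C min(b, 1-b) + delta V b, the convex value of
  the uninformative precision q = 1/2. Convexity in q and concavity of beta bound the learning
  value at any q by its values at q = 1/2 and q = max(b, 1-b). Thus for every q the value at a
  convex combination of beliefs is dominated by the same combination of T V.
*)

lemma convex_on_LIMSEQ:
  fixes f :: "nat \<Rightarrow> 'a::real_vector \<Rightarrow> real"
  assumes "\<And>n. convex_on S (f n)" "convex S"
    and "\<And>x. x \<in> S \<Longrightarrow> (\<lambda>n. f n x) \<longlonglongrightarrow> g x"
  shows "convex_on S g"
proof (rule convex_onI)
  fix t :: real and x y assume t: "0 < t" "t < 1" and xy: "x \<in> S" "y \<in> S"
  then have "(1 - t) *\<^sub>R x + t *\<^sub>R y \<in> S"
    using \<open>convex S\<close> by (simp add: convex_def)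
  with xy have lim: "(\<lambda>n. f n ((1 - t) *\<^sub>R x + t *\<^sub>R y)) \<longlonglongrightarrow> g ((1 - t) *\<^sub>R x + t *\<^sub>R y)"
    "(\<lambda>n. (1 - t) * f n x + t * f n y) \<longlonglongrightarrow> (1 - t) * g x + t * g y"
    by (auto intro!: tendsto_add tendsto_mult_left assms(3))
  have "f n ((1 - t) *\<^sub>R x + t *\<^sub>R y) \<le> (1 - t) * f n x + t * f n y" for n
    using convex_onD[OF assms(1)] t xy by simp
  then show "g ((1 - t) *\<^sub>R x + t *\<^sub>R y) \<le> (1 - t) * g x + t * g y"
    using LIMSEQ_le[OF lim] by blast
qed fact

lemma sig_y_alt: "sig_y b q = q*b + (1-q)*(1-b)"
  by (simp add: sig_y_def algebra_simps)

lemma sig_z_alt: "sig_z b q = (1-q)*b + q*(1-b)"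
  by (simp add: sig_z_def algebra_simps)

lemma sig_z_eq: "sig_z b q = 1 - sig_y b q"
  by (simp add: sig_y_def sig_z_def)

lemma sig_y_bounds:
  assumes "b \<in> {0..1}" "q \<in> {0..1}"
  shows "0 \<le> sig_y b q" "sig_y b q \<le> 1"
proof -
  have "0 \<le> q*b + (1-q)*(1-b)" "0 \<le> (1-q)*b + q*(1-b)"
    using assms by auto
  moreover have "q*b + (1-q)*(1-b) + ((1-q)*b + q*(1-b)) = 1"
    by (simp add: algebra_simps)
  ultimately show "0 \<le> sig_y b q" "sig_y b q \<le> 1"
    unfolding sig_y_alt by linarith+
qed

lemma divide_sum_in_unit:
  fixes u w :: real
  assumes "0 \<le> u" "0 \<le> w"
  shows "u / (u + w) \<in> {0..1}"
  using assms by (cases "u + w = 0") (auto simp: divide_le_eq_1)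

definition post_G :: "real \<Rightarrow> real \<Rightarrow> real" where
  "post_G b q = q*b / sig_y b q"

definition post_B :: "real \<Rightarrow> real \<Rightarrow> real" where
  "post_B b q = (1-q)*b / sig_z b q"

lemma post_G_in_unit: "b \<in> {0..1} \<Longrightarrow> q \<in> {0..1} \<Longrightarrow> post_G b q \<in> {0..1}"
  unfolding post_G_def sig_y_alt by (rule divide_sum_in_unit) auto

lemma post_B_in_unit: "b \<in> {0..1} \<Longrightarrow> q \<in> {0..1} \<Longrightarrow> post_B b q \<in> {0..1}"
  unfolding post_B_def sig_z_alt by (rule divide_sum_in_unit) auto

definition next_value :: "(real \<Rightarrow> real) \<Rightarrow> real \<Rightarrow> real \<Rightarrow> real" where
  "next_value V b q =
     (if 1 - q \<le> b \<and> b \<le> q then sig_y b q * V (post_G b q) + sig_z b q * V (post_B b q)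
      else V b)"

lemma expectation_belief_step:
  assumes "b \<in> {0..1}" "q \<in> {0..1}"
  shows "measure_pmf.expectation (belief_step b q) V = next_value V b q"
  using sig_y_bounds[OF assms]
  unfolding belief_step_def next_value_def post_G_def post_B_def sig_z_eq
  by (auto simp: algebra_simps)

lemma set_pmf_belief_step:
  assumes "b \<in> {0..1}" "q \<in> {0..1}"
  shows "set_pmf (belief_step b q) \<subseteq> {0..1}" "finite (set_pmf (belief_step b q))"
proof -
  have "set_pmf (belief_step b q) \<subseteq> {post_G b q, post_B b q, b}"
    unfolding belief_step_def post_G_def post_B_def by auto
  then show "set_pmf (belief_step b q) \<subseteq> {0..1}" "finite (set_pmf (belief_step b q))"
    using post_G_in_unit[OF assms] post_B_in_unit[OF assms] assms by (auto intro: finite_subset)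
qed

lemma next_value_mono:
  assumes "\<And>x. x \<in> {0..1} \<Longrightarrow> V x \<le> W x" "b \<in> {0..1}" "q \<in> {0..1}"
  shows "next_value V b q \<le> next_value W b q"
proof -
  have "sig_y b q * V (post_G b q) \<le> sig_y b q * W (post_G b q)"
    "sig_z b q * V (post_B b q) \<le> sig_z b q * W (post_B b q)"
    using assms post_G_in_unit[OF assms(2,3)] post_B_in_unit[OF assms(2,3)]
      sig_y_bounds[OF assms(2,3)] by (auto intro!: mult_left_mono simp: sig_z_eq)
  then show ?thesis
    using assms unfolding next_value_def by auto
qed

lemma next_value_add_const: "next_value (\<lambda>x. V x + d) b q = next_value V b q + d"
  unfolding next_value_def sig_z_eq by (simp add: algebra_simps)

lemma next_value_const: "next_value (\<lambda>x. d) b q = d"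
  using next_value_add_const[of "\<lambda>x. 0" d] by (simp add: next_value_def)

definition perspective :: "(real \<Rightarrow> real) \<Rightarrow> real \<Rightarrow> real \<Rightarrow> real" where
  "perspective V u w = (u + w) * V (u / (u + w))"

lemma perspective_scale:
  assumes "0 \<le> c"
  shows "perspective V (c*u) (c*w) = c * perspective V u w"
proof (cases "c = 0")
  case False
  then have "c*u / (c*u + c*w) = u / (u + w)"
    by (simp flip: distrib_left)
  then show ?thesis
    unfolding perspective_def by (simp add: algebra_simps)
qed (simp add: perspective_def)

lemma perspective_subadditive:
  assumes V: "convex_on {0..1} V"
    and nonneg: "0 \<le> u1" "0 \<le> w1" "0 \<le> u2" "0 \<le> w2"
  shows "perspective V (u1 + u2) (w1 + w2) \<le> perspective V u1 w1 + perspective V u2 w2"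
proof (cases "u1 + w1 = 0 \<or> u2 + w2 = 0")
  case True
  then have "u1 = 0 \<and> w1 = 0 \<or> u2 = 0 \<and> w2 = 0"
    using nonneg by linarith
  then show ?thesis
    by (auto simp: perspective_def)
next
  case False
  define s1 s2 where "s1 = u1 + w1" and "s2 = u2 + w2"
  have pos: "s1 > 0" "s2 > 0"
    using False nonneg by (auto simp: s1_def s2_def)
  define t where "t = s2 / (s1 + s2)"
  have t: "0 \<le> t" "t \<le> 1" "1 - t = s1 / (s1 + s2)"
    using pos by (auto simp: t_def field_simps)
  have "(1 - t) * (u1 / s1) = u1 / (s1 + s2)" "t * (u2 / s2) = u2 / (s1 + s2)"
    using pos unfolding t(3) by (simp_all add: t_def)
  then have comb: "(u1 + u2) / (s1 + s2) = (1 - t) * (u1 / s1) + t * (u2 / s2)"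
    by (simp add: add_divide_distrib)
  have "V ((u1 + u2) / (s1 + s2)) \<le> (1 - t) * V (u1 / s1) + t * V (u2 / s2)"
    using convex_onD[OF V t(1,2), of "u1 / s1" "u2 / s2"] comb
      divide_sum_in_unit nonneg by (simp add: s1_def s2_def)
  then have "(s1 + s2) * V ((u1 + u2) / (s1 + s2))
      \<le> (s1 + s2) * ((1 - t) * V (u1 / s1) + t * V (u2 / s2))"
    using pos by (simp add: mult_left_mono)
  also have "\<dots> = ((s1 + s2) * (1 - t)) * V (u1 / s1) + ((s1 + s2) * t) * V (u2 / s2)"
    by (simp add: algebra_simps)
  also have "\<dots> = s1 * V (u1 / s1) + s2 * V (u2 / s2)"
    using pos unfolding t(3) by (simp add: t_def)
  finally show ?thesis
    unfolding perspective_def s1_def s2_def by (simp add: algebra_simps)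
qed

lemma perspective_convex_combination:
  assumes V: "convex_on {0..1} V"
    and nonneg: "0 \<le> u1" "0 \<le> w1" "0 \<le> u2" "0 \<le> w2" and t: "t \<in> {0..1}"
  shows "perspective V ((1-t)*u1 + t*u2) ((1-t)*w1 + t*w2)
    \<le> (1-t) * perspective V u1 w1 + t * perspective V u2 w2"
  using perspective_subadditive[OF V, of "(1-t)*u1" "(1-t)*w1" "t*u2" "t*w2"]
    perspective_scale[of "1-t" V u1 w1] perspective_scale[of t V u2 w2] nonneg t
  by simp

lemma perspective_convex_affine:
  fixes u w :: "real \<Rightarrow> real"
  assumes V: "convex_on {0..1} V" and "convex S"
    and u: "\<And>t x y. u ((1-t)*x + t*y) = (1-t) * u x + t * u y"
    and w: "\<And>t x y. w ((1-t)*x + t*y) = (1-t) * w x + t * w y"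
    and nonneg: "\<And>x. x \<in> S \<Longrightarrow> 0 \<le> u x" "\<And>x. x \<in> S \<Longrightarrow> 0 \<le> w x"
  shows "convex_on S (\<lambda>x. perspective V (u x) (w x))"
proof (rule convex_onI)
  fix t x y :: real
  assume "0 < t" "t < 1" "x \<in> S" "y \<in> S"
  then show "perspective V (u ((1-t) *\<^sub>R x + t *\<^sub>R y)) (w ((1-t) *\<^sub>R x + t *\<^sub>R y))
      \<le> (1-t) * perspective V (u x) (w x) + t * perspective V (u y) (w y)"
    unfolding real_scaleR_def u w
    by (intro perspective_convex_combination[OF V] nonneg) auto
qed fact

definition signal_value :: "(real \<Rightarrow> real) \<Rightarrow> real \<Rightarrow> real \<Rightarrow> real" where
  "signal_value V b q = perspective V (q*b) ((1-q)*(1-b)) + perspective V ((1-q)*b) (q*(1-b))"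

lemma next_value_eq_signal_value:
  "1 - q \<le> b \<Longrightarrow> b \<le> q \<Longrightarrow> next_value V b q = signal_value V b q"
  unfolding next_value_def signal_value_def perspective_def post_G_def post_B_def
    sig_y_alt sig_z_alt by simp

lemma signal_value_half: "signal_value V b (1/2) = V b"
  unfolding signal_value_def perspective_def by (simp add: field_simps)

lemma next_value_half: "next_value V b (1/2) = V b"
  using next_value_eq_signal_value[of "1/2" b V] signal_value_half[of V b]
  by (auto simp: next_value_def)

lemma signal_value_convex_in_belief:
  assumes "convex_on {0..1} V" "q \<in> {0..1}"
  shows "convex_on {0..1} (\<lambda>b. signal_value V b q)"
  unfolding signal_value_def using assms
  by (intro convex_on_add perspective_convex_affine mult_nonneg_nonneg) (auto simp: algebra_simps)

lemma signal_value_convex_in_precision: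
  assumes "convex_on {0..1} V" "b \<in> {0..1}"
  shows "convex_on {0..1} (\<lambda>q. signal_value V b q)"
  unfolding signal_value_def using assms
  by (intro convex_on_add perspective_convex_affine mult_nonneg_nonneg) (auto simp: algebra_simps)

lemma policy_in_range: "pol \<in> policies \<Longrightarrow> x \<in> {0..1} \<Longrightarrow> pol x \<in> {1/2..1}"
  unfolding policies_def by auto

lemma set_pmf_belief_dist:
  assumes "pol \<in> policies" "b \<in> {0..1}"
  shows "set_pmf (belief_dist pol b k) \<subseteq> {0..1} \<and> finite (set_pmf (belief_dist pol b k))"
proof (induction k)
  case (Suc k)
  have "set_pmf (belief_step x (pol x)) \<subseteq> {0..1} \<and> finite (set_pmf (belief_step x (pol x)))"
    if "x \<in> set_pmf (belief_dist pol b k)" for x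
  proof -
    have "x \<in> {0..1}"
      using that Suc by auto
    then show ?thesis
      using set_pmf_belief_step[of x "pol x"] policy_in_range[OF assms(1), of x] by auto
  qed
  then show ?case
    using Suc by auto
qed (use assms in simp)

lemma integrable_belief_dist:
  "pol \<in> policies \<Longrightarrow> b \<in> {0..1} \<Longrightarrow> integrable (belief_dist pol b k) (f :: real \<Rightarrow> real)"
  using set_pmf_belief_dist by (intro integrable_measure_pmf_finite) auto

lemma expectation_belief_dist_mono:
  fixes f g :: "real \<Rightarrow> real"
  assumes "pol \<in> policies" "b \<in> {0..1}" "\<And>x. x \<in> {0..1} \<Longrightarrow> f x \<le> g x"
  shows "measure_pmf.expectation (belief_dist pol b k) f
    \<le> measure_pmf.expectation (belief_dist pol b k) g"
  using set_pmf_belief_dist[OF assms(1,2), of k] assms(3)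
  by (intro integral_mono_AE integrable_belief_dist[OF assms(1,2)] AE_pmfI) auto

lemma expectation_belief_dist_Suc:
  assumes pol: "pol \<in> policies" and b: "b \<in> {0..1}"
  shows "measure_pmf.expectation (belief_dist pol b (Suc k)) f =
    measure_pmf.expectation (belief_dist pol b k) (\<lambda>x. next_value f x (pol x))"
proof -
  let ?p = "belief_dist pol b k"
  have fin: "finite (set_pmf ?p)" and sub: "set_pmf ?p \<subseteq> {0..1}"
    using set_pmf_belief_dist[OF pol b] by auto
  have step: "x \<in> set_pmf ?p \<Longrightarrow> x \<in> {0..1} \<and> pol x \<in> {0..1}" for x
    using sub policy_in_range[OF pol, of x] by auto
  have "measure_pmf.expectation (belief_dist pol b (Suc k)) f =
      (\<Sum>x\<in>set_pmf ?p. pmf ?p x *\<^sub>R measure_pmf.expectation (belief_step x (pol x)) f)"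
    unfolding belief_dist.simps
    by (rule pmf_expectation_bind[OF fin]) (use step set_pmf_belief_step in auto)
  also have "\<dots> = (\<Sum>x\<in>set_pmf ?p. pmf ?p x *\<^sub>R next_value f x (pol x))"
    using step expectation_belief_step by (auto intro: sum.cong)
  also have "\<dots> = measure_pmf.expectation ?p (\<lambda>x. next_value f x (pol x))"
    by (rule integral_measure_pmf[OF fin, symmetric]) auto
  finally show ?thesis .
qed

locale altruistic_planner =
  fixes \<beta> :: "real \<Rightarrow> real" and C \<delta> :: real
  assumes C_pos: "C > 0"
    and discount_nonneg: "0 \<le> \<delta>" and discount_less_1: "\<delta> < 1"
    and cost_nonneg: "\<And>q. q \<in> {1/2..1} \<Longrightarrow> 0 \<le> \<beta> q"
    and cost_le_max: "\<And>q. q \<in> {1/2..1} \<Longrightarrow> \<beta> q \<le> \<beta> 1"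
    and cost_half: "\<beta> (1/2) = 0"
    and cost_concave: "concave_on {1/2..1} \<beta>"
begin

definition qval :: "(real \<Rightarrow> real) \<Rightarrow> real \<Rightarrow> real \<Rightarrow> real" where
  "qval V b q = r_A \<beta> C b q + \<delta> * next_value V b q"

definition bellman :: "(real \<Rightarrow> real) \<Rightarrow> real \<Rightarrow> real" where
  "bellman V b = (SUP q\<in>{1/2..1}. qval V b q)"

definition qval_learn :: "(real \<Rightarrow> real) \<Rightarrow> real \<Rightarrow> real \<Rightarrow> real" where
  "qval_learn V b q = - \<beta> q - C * (1 - q) + \<delta> * signal_value V b q"

definition qval_herd :: "(real \<Rightarrow> real) \<Rightarrow> real \<Rightarrow> real" where
  "qval_herd V b = - C * min b (1 - b) + \<delta> * V b"

abbreviation reward :: "(real \<Rightarrow> real) \<Rightarrow> real \<Rightarrow> real" where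
  "reward pol x \<equiv> r_A \<beta> C x (pol x)"

definition reward_bound :: real where
  "reward_bound = \<beta> 1 + C"

definition value_bound :: real where
  "value_bound = reward_bound / (1 - \<delta>)"

definition admissible :: "(real \<Rightarrow> real) \<Rightarrow> bool" where
  "admissible V \<longleftrightarrow> (\<forall>x\<in>{0..1}. - value_bound \<le> V x \<and> V x \<le> 0)"

lemma reward_bounds:
  assumes "b \<in> {0..1}" "q \<in> {1/2..1}"
  shows "- reward_bound \<le> r_A \<beta> C b q" "r_A \<beta> C b q \<le> 0"
proof -
  have "0 \<le> C * min b (min (1-b) (1-q))" "C * min b (min (1-b) (1-q)) \<le> C"
    using assms C_pos by (auto simp: mult_left_le)
  moreover have "0 \<le> \<beta> q" "\<beta> q \<le> \<beta> 1"
    using assms cost_nonneg cost_le_max by auto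
  ultimately show "- reward_bound \<le> r_A \<beta> C b q" "r_A \<beta> C b q \<le> 0"
    unfolding r_A_def reward_bound_def by linarith+
qed

lemma value_bound_pos: "0 < value_bound"
  using C_pos cost_nonneg[of 1] discount_less_1 by (simp add: value_bound_def reward_bound_def)

lemma value_bound_fixpoint: "reward_bound + \<delta> * value_bound = value_bound"
  using discount_less_1 by (simp add: value_bound_def field_simps)

lemma qval_le_0:
  assumes "admissible V" "b \<in> {0..1}" "q \<in> {1/2..1}"
  shows "qval V b q \<le> 0"
proof -
  have "next_value V b q \<le> next_value (\<lambda>_. 0) b q"
    using assms by (intro next_value_mono) (auto simp: admissible_def)
  then have "\<delta> * next_value V b q \<le> 0"
    using discount_nonneg by (simp add: next_value_const mult_nonneg_nonpos)
  then show ?thesis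
    using reward_bounds(2)[OF assms(2,3)] by (simp add: qval_def)
qed

lemma bdd_above_qval: "admissible V \<Longrightarrow> b \<in> {0..1} \<Longrightarrow> bdd_above (qval V b ` {1/2..1})"
  using qval_le_0 by (intro bdd_aboveI2[of _ _ 0]) auto

lemma qval_le_bellman:
  "admissible V \<Longrightarrow> b \<in> {0..1} \<Longrightarrow> q \<in> {1/2..1} \<Longrightarrow> qval V b q \<le> bellman V b"
  unfolding bellman_def by (intro cSUP_upper bdd_above_qval)

lemma bellman_le:
  "(\<And>q. q \<in> {1/2..1} \<Longrightarrow> qval V b q \<le> c) \<Longrightarrow> bellman V b \<le> c"
  unfolding bellman_def by (intro cSUP_least) auto

lemma qval_eq_qval_learn:
  assumes "1 - q \<le> b" "b \<le> q"
  shows "qval V b q = qval_learn V b q"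
proof -
  have "min b (min (1-b) (1-q)) = 1 - q"
    using assms by (auto simp: min_def)
  then show ?thesis
    using assms by (simp add: qval_def qval_learn_def r_A_def next_value_eq_signal_value)
qed

lemma qval_le_qval_herd:
  assumes "q \<in> {1/2..1}" "\<not> (1 - q \<le> b \<and> b \<le> q)"
  shows "qval V b q \<le> qval_herd V b"
proof -
  have "min b (min (1-b) (1-q)) = min b (1-b)"
    using assms by (auto simp: min_def)
  moreover have "next_value V b q = V b"
    using assms(2) unfolding next_value_def by auto
  ultimately show ?thesis
    using cost_nonneg[OF assms(1)] by (simp add: qval_def qval_herd_def r_A_def)
qed

lemma qval_half: "qval V b (1/2) = qval_herd V b"
proof -
  have "min b (min (1-b) (1 - 1/2)) = min b (1-b)"
    by (auto simp: min_def)
  then show ?thesis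
    by (simp add: qval_def qval_herd_def r_A_def next_value_half cost_half)
qed

lemma qval_herd_le_bellman: "admissible V \<Longrightarrow> b \<in> {0..1} \<Longrightarrow> qval_herd V b \<le> bellman V b"
  using qval_le_bellman[of V b "1/2"] by (simp add: qval_half)

lemma qval_learn_convex_in_belief:
  assumes "convex_on {0..1} V" "q \<in> {0..1}"
  shows "convex_on {0..1} (\<lambda>b. qval_learn V b q)"
  unfolding qval_learn_def using assms discount_nonneg
  by (intro convex_on_add convex_on_cmul signal_value_convex_in_belief) (auto simp: convex_on_const)

lemma qval_learn_convex_in_precision:
  assumes "convex_on {0..1} V" "b \<in> {0..1}"
  shows "convex_on {1/2..1} (qval_learn V b)"
proof -
  have "convex_on {1/2..1} (\<lambda>q. - \<beta> q)"
    using cost_concave by (simp add: concave_on_def)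
  moreover have "convex_on {1/2..1} (\<lambda>q. C * q - C)"
    by (rule convex_onI) (auto simp: algebra_simps)
  moreover have "convex_on {1/2..1} (\<lambda>q. \<delta> * signal_value V b q)"
    using discount_nonneg convex_on_subset[OF signal_value_convex_in_precision[OF assms]]
    by (intro convex_on_cmul) auto
  ultimately have "convex_on {1/2..1} (\<lambda>q. - \<beta> q + (C * q - C) + \<delta> * signal_value V b q)"
    by (intro convex_on_add)
  then show ?thesis
    unfolding qval_learn_def by (simp add: algebra_simps)
qed

lemma qval_learn_le_bellman:
  assumes V: "convex_on {0..1} V" "admissible V" and b: "b \<in> {0..1}" and q: "q \<in> {1/2..1}"
  shows "qval_learn V b q \<le> bellman V b"
proof -
  \<comment> \<open>the least precision at which the agent follows her signal\<close>
  define m where "m = max b (1 - b)"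
  have m: "m \<in> {1/2..1}" "1 - m \<le> b" "b \<le> m"
    using b by (auto simp: m_def max_def)
  have at_m: "qval_learn V b m \<le> bellman V b"
    using qval_eq_qval_learn[OF m(2,3)] qval_le_bellman[OF V(2) b m(1)] by simp
  have "qval_learn V b (1/2) = - C * (1/2) + \<delta> * V b"
    by (simp add: qval_learn_def signal_value_half cost_half)
  also have "\<dots> \<le> qval_herd V b"
    using C_pos by (simp add: qval_herd_def min_def)
  finally have at_half: "qval_learn V b (1/2) \<le> bellman V b"
    using qval_herd_le_bellman[OF V(2) b] by simp
  show ?thesis
  proof (cases "m \<le> q")
    case True
    then show ?thesis
      using qval_eq_qval_learn[of q b V] qval_le_bellman[OF V(2) b q] m by simp
  next
    case False
    define t where "t = (q - 1/2) / (m - 1/2)"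
    have t: "0 \<le> t" "t \<le> 1"
      using False q by (auto simp: t_def divide_le_eq_1)
    have "t * (m - 1/2) = q - 1/2"
      using False q by (simp add: t_def)
    then have q_eq: "q = (1 - t) * (1/2) + t * m"
      by (simp add: algebra_simps diff_divide_distrib)
    have "qval_learn V b q \<le> (1 - t) * qval_learn V b (1/2) + t * qval_learn V b m"
      using convex_onD[OF qval_learn_convex_in_precision[OF V(1) b] t, of "1/2" m] m q_eq
      by simp
    also have "\<dots> \<le> (1 - t) * bellman V b + t * bellman V b"
      using at_half at_m t by (intro add_mono mult_left_mono) auto
    finally show ?thesis
      by (simp add: algebra_simps)
  qed
qed

lemma qval_herd_convex:
  assumes "convex_on {0..1} V"
  shows "convex_on {0..1} (qval_herd V)"
proof -
  have "convex_on {0..1} (\<lambda>b. C * - min b (1 - b))"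
  proof (intro convex_on_cmul convex_onI)
    fix t x y :: real assume "0 < t" "t < 1"
    then have "(1 - t) * min x (1 - x) \<le> (1 - t) * x" "(1 - t) * min x (1 - x) \<le> (1 - t) * (1 - x)"
      "t * min y (1 - y) \<le> t * y" "t * min y (1 - y) \<le> t * (1 - y)"
      by (auto intro: mult_left_mono)
    then have "(1 - t) * min x (1 - x) + t * min y (1 - y)
        \<le> min ((1 - t) * x + t * y) (1 - ((1 - t) * x + t * y))"
      by (auto simp: algebra_simps)
    then show "- min ((1 - t) *\<^sub>R x + t *\<^sub>R y) (1 - ((1 - t) *\<^sub>R x + t *\<^sub>R y))
        \<le> (1 - t) * - min x (1 - x) + t * - min y (1 - y)"
      by (simp add: min_def)
  qed (use C_pos in auto)
  moreover have "convex_on {0..1} (\<lambda>b. \<delta> * V b)"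
    using assms discount_nonneg by (intro convex_on_cmul)
  ultimately have "convex_on {0..1} (\<lambda>b. C * - min b (1 - b) + \<delta> * V b)"
    by (rule convex_on_add)
  moreover have "qval_herd V = (\<lambda>b. C * - min b (1 - b) + \<delta> * V b)"
    by (simp add: qval_herd_def fun_eq_iff)
  ultimately show ?thesis
    by (simp only:)
qed

lemma bellman_convex:
  assumes V: "convex_on {0..1} V" "admissible V"
  shows "convex_on {0..1} (bellman V)"
proof (rule convex_onI)
  fix t x y :: real
  assume "0 < t" "t < 1" and xy: "x \<in> {0..1}" "y \<in> {0..1}"
  then have t: "0 \<le> t" "t \<le> 1" by auto
  let ?z = "(1 - t) * x + t * y"
  have "qval V ?z q \<le> (1 - t) * bellman V x + t * bellman V y" if q: "q \<in> {1/2..1}" for q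
  proof (cases "1 - q \<le> ?z \<and> ?z \<le> q")
    case True
    have "qval V ?z q = qval_learn V ?z q"
      using True by (intro qval_eq_qval_learn) auto
    also have "\<dots> \<le> (1 - t) * qval_learn V x q + t * qval_learn V y q"
      using convex_onD[OF qval_learn_convex_in_belief[OF V(1)] t xy] q by simp
    also have "\<dots> \<le> (1 - t) * bellman V x + t * bellman V y"
      using qval_learn_le_bellman[OF V] xy q t by (intro add_mono mult_left_mono) auto
    finally show ?thesis .
  next
    case False
    have "qval V ?z q \<le> qval_herd V ?z"
      using False q by (intro qval_le_qval_herd)
    also have "\<dots> \<le> (1 - t) * qval_herd V x + t * qval_herd V y"
      using convex_onD[OF qval_herd_convex[OF V(1)] t xy] by simp
    also have "\<dots> \<le> (1 - t) * bellman V x + t * bellman V y"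
      using qval_herd_le_bellman[OF V(2)] xy t by (intro add_mono mult_left_mono) auto
    finally show ?thesis .
  qed
  then have "bellman V ?z \<le> (1 - t) * bellman V x + t * bellman V y"
    by (intro bellman_le)
  then show "bellman V ((1 - t) *\<^sub>R x + t *\<^sub>R y) \<le> (1 - t) * bellman V x + t * bellman V y"
    by simp
qed simp

lemma bellman_admissible:
  assumes "admissible V"
  shows "admissible (bellman V)"
  unfolding admissible_def
proof
  fix b :: real assume b: "b \<in> {0..1}"
  have "C * min b (1 - b) \<le> C"
    using C_pos by (simp add: mult_left_le)
  moreover have "\<delta> * - value_bound \<le> \<delta> * V b"
    using assms b discount_nonneg by (intro mult_left_mono) (auto simp: admissible_def)
  ultimately have "- reward_bound - \<delta> * value_bound \<le> qval_herd V b"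
    using cost_nonneg[of 1] by (simp add: qval_herd_def reward_bound_def)
  then have "- value_bound \<le> bellman V b"
    using value_bound_fixpoint qval_herd_le_bellman[OF assms b] by linarith
  moreover have "bellman V b \<le> 0"
    using qval_le_0[OF assms b] by (intro bellman_le)
  ultimately show "- value_bound \<le> bellman V b \<and> bellman V b \<le> 0" ..
qed

lemma bellman_le_shift:
  assumes W: "admissible W" and le: "\<And>x. x \<in> {0..1} \<Longrightarrow> V x \<le> W x + d" and b: "b \<in> {0..1}"
  shows "bellman V b \<le> bellman W b + \<delta> * d"
proof (rule bellman_le)
  fix q :: real assume q: "q \<in> {1/2..1}"
  have "next_value V b q \<le> next_value W b q + d"
    using next_value_mono[of V "\<lambda>x. W x + d"] le b q by (simp add: next_value_add_const)
  then have "\<delta> * next_value V b q \<le> \<delta> * (next_value W b q + d)"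
    using discount_nonneg by (rule mult_left_mono)
  then have "qval V b q \<le> qval W b q + \<delta> * d"
    by (simp add: qval_def algebra_simps)
  also have "\<dots> \<le> bellman W b + \<delta> * d"
    using qval_le_bellman[OF W b q] by simp
  finally show "qval V b q \<le> bellman W b + \<delta> * d" .
qed

primrec value_iter :: "nat \<Rightarrow> real \<Rightarrow> real" where
  "value_iter 0 = (\<lambda>_. 0)"
| "value_iter (Suc n) = bellman (value_iter n)"

lemma value_iter_admissible: "admissible (value_iter n)"
proof (induction n)
  case 0
  then show ?case
    using value_bound_pos by (simp add: admissible_def)
qed (simp add: bellman_admissible)

lemma value_iter_convex: "convex_on {0..1} (value_iter n)"
  by (induction n) (auto simp: bellman_convex value_iter_admissible convex_on_const)

lemma value_iter_le_Suc:
  "x \<in> {0..1} \<Longrightarrow> value_iter n x \<le> value_iter (Suc n) x + \<delta> ^ n * value_bound"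
proof (induction n arbitrary: x)
  case 0
  then have "- value_bound \<le> value_iter (Suc 0) x"
    using value_iter_admissible[of "Suc 0"] unfolding admissible_def by blast
  then show ?case
    by simp
next
  case (Suc n)
  then show ?case
    using bellman_le_shift[OF value_iter_admissible Suc.IH Suc.prems] by simp
qed


lemma expectation_qval:
  assumes "pol \<in> policies" "b \<in> {0..1}"
  shows "measure_pmf.expectation (belief_dist pol b k) (\<lambda>x. qval V x (pol x)) =
    measure_pmf.expectation (belief_dist pol b k) (reward pol) +
    \<delta> * measure_pmf.expectation (belief_dist pol b (Suc k)) V"
  unfolding expectation_belief_dist_Suc[OF assms] qval_def
  by (simp add: integrable_belief_dist[OF assms])

lemma expectation_reward_bounds:
  assumes "pol \<in> policies" "b \<in> {0..1}"
  shows "- reward_bound \<le> measure_pmf.expectation (belief_dist pol b k) (reward pol)"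
    "measure_pmf.expectation (belief_dist pol b k) (reward pol) \<le> 0"
  using expectation_belief_dist_mono[OF assms, of "\<lambda>_. - reward_bound" "reward pol" k]
    expectation_belief_dist_mono[OF assms, of "reward pol" "\<lambda>_. 0" k]
    reward_bounds policy_in_range[OF assms(1)] by auto

lemma summable_discounted_reward:
  assumes "pol \<in> policies" "b \<in> {0..1}"
  shows "summable (\<lambda>k. \<delta> ^ k * measure_pmf.expectation (belief_dist pol b k) (reward pol))"
proof (rule summable_comparison_test)
  show "summable (\<lambda>k. reward_bound * \<delta> ^ k)"
    using discount_nonneg discount_less_1 by (intro summable_mult summable_geometric) auto
  have "\<bar>measure_pmf.expectation (belief_dist pol b k) (reward pol)\<bar> \<le> reward_bound" for k
    using expectation_reward_bounds[OF assms, of k] by auto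
  then have "\<delta> ^ k * \<bar>measure_pmf.expectation (belief_dist pol b k) (reward pol)\<bar>
      \<le> \<delta> ^ k * reward_bound" for k
    using discount_nonneg by (intro mult_left_mono) auto
  then show "\<exists>N. \<forall>k\<ge>N. norm (\<delta> ^ k * measure_pmf.expectation (belief_dist pol b k) (reward pol))
      \<le> reward_bound * \<delta> ^ k"
    using discount_nonneg by (simp add: abs_mult mult.commute)
qed

lemma discounted_reward_sum_le_value_iter:
  assumes pol: "pol \<in> policies" and b: "b \<in> {0..1}"
  shows "(\<Sum>k\<in>{j..<j+n}. \<delta> ^ k * measure_pmf.expectation (belief_dist pol b k) (reward pol))
    \<le> \<delta> ^ j * measure_pmf.expectation (belief_dist pol b j) (value_iter n)"
proof (induction n arbitrary: j)
  case (Suc n)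
  let ?E = "\<lambda>k f. measure_pmf.expectation (belief_dist pol b k) f"
  have "(\<Sum>k\<in>{j..<j+Suc n}. \<delta> ^ k * ?E k (reward pol))
      = \<delta> ^ j * ?E j (reward pol) + (\<Sum>k\<in>{Suc j..<Suc j+n}. \<delta> ^ k * ?E k (reward pol))"
    by (subst sum.atLeast_Suc_lessThan) auto
  also have "\<dots> \<le> \<delta> ^ j * ?E j (reward pol) + \<delta> ^ Suc j * ?E (Suc j) (value_iter n)"
    using Suc.IH by (rule add_left_mono)
  also have "\<dots> = \<delta> ^ j * ?E j (\<lambda>x. qval (value_iter n) x (pol x))"
    by (simp add: expectation_qval[OF pol b] algebra_simps)
  also have "\<dots> \<le> \<delta> ^ j * ?E j (value_iter (Suc n))"
    using qval_le_bellman[OF value_iter_admissible] policy_in_range[OF pol] discount_nonneg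
    by (auto intro!: mult_left_mono expectation_belief_dist_mono[OF pol b])
  finally show ?case .
qed simp

lemma V_pol_le_value_iter:
  assumes pol: "pol \<in> policies" and b: "b \<in> {0..1}"
  shows "V_pol \<beta> C \<delta> pol b \<le> value_iter n b"
proof -
  let ?f = "\<lambda>k. \<delta> ^ k * measure_pmf.expectation (belief_dist pol b k) (reward pol)"
  have summable: "summable ?f"
    by (rule summable_discounted_reward[OF pol b])
  have "V_pol \<beta> C \<delta> pol b = (\<Sum>k. ?f (k + n)) + (\<Sum>k<n. ?f k)"
    unfolding V_pol_def by (rule suminf_split_initial_segment[OF summable])
  also have "(\<Sum>k. ?f (k + n)) \<le> 0"
    using suminf_le[OF _ summable_ignore_initial_segment[OF summable] summable_zero, of n]
      expectation_reward_bounds(2)[OF pol b] discount_nonneg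
    by (simp add: mult_nonneg_nonpos)
  also have "(\<Sum>k<n. ?f k) \<le> value_iter n b"
    using discounted_reward_sum_le_value_iter[OF pol b, of 0 n] by (simp add: atLeast0LessThan)
  finally show ?thesis
    by simp
qed

lemma greedy_policy_exists:
  assumes "admissible V" "\<epsilon> > 0"
  shows "\<exists>pol\<in>policies. \<forall>x\<in>{0..1}. bellman V x - \<epsilon> < qval V x (pol x)"
proof -
  have "\<exists>q\<in>{1/2..1}. bellman V x - \<epsilon> < qval V x q" if "x \<in> {0..1}" for x
    using assms that bdd_above_qval
    by (subst less_cSUP_iff[symmetric]) (auto simp: bellman_def)
  then obtain pol where "\<forall>x\<in>{0..1}. pol x \<in> {1/2..1} \<and> bellman V x - \<epsilon> < qval V x (pol x)"
    by metis
  then show ?thesis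
    unfolding policies_def by blast
qed

lemma discounted_reward_sum_ge:
  assumes pol: "pol \<in> policies" and b: "b \<in> {0..1}"
    and greedy: "\<And>x. x \<in> {0..1} \<Longrightarrow> V x - \<eta> \<le> qval V x (pol x)"
  shows "V b - \<eta> * (\<Sum>k<n. \<delta> ^ k)
    \<le> (\<Sum>k<n. \<delta> ^ k * measure_pmf.expectation (belief_dist pol b k) (reward pol))
      + \<delta> ^ n * measure_pmf.expectation (belief_dist pol b n) V"
proof (induction n)
  case (Suc n)
  let ?E = "\<lambda>k f. measure_pmf.expectation (belief_dist pol b k) f"
  have "?E n V - \<eta> = ?E n (\<lambda>x. V x - \<eta>)"
    by (simp add: integrable_belief_dist[OF pol b])
  also have "\<dots> \<le> ?E n (\<lambda>x. qval V x (pol x))"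
    using greedy by (rule expectation_belief_dist_mono[OF pol b])
  also have "\<dots> = ?E n (reward pol) + \<delta> * ?E (Suc n) V"
    by (rule expectation_qval[OF pol b])
  finally have "\<delta> ^ n * (?E n V - \<eta>) \<le> \<delta> ^ n * (?E n (reward pol) + \<delta> * ?E (Suc n) V)"
    using discount_nonneg by (intro mult_left_mono) auto
  then show ?case
    using Suc.IH by (simp add: algebra_simps)
qed simp

lemma V_pol_ge_of_qval_ge:
  assumes pol: "pol \<in> policies" and b: "b \<in> {0..1}" and V: "admissible V" and "0 \<le> \<eta>"
    and greedy: "\<And>x. x \<in> {0..1} \<Longrightarrow> V x - \<eta> \<le> qval V x (pol x)"
  shows "V b - \<eta> / (1 - \<delta>) \<le> V_pol \<beta> C \<delta> pol b"
proof -
  let ?E = "\<lambda>k f. measure_pmf.expectation (belief_dist pol b k) f"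
  have "V b - \<eta> / (1 - \<delta>) \<le> (\<Sum>k<n. \<delta> ^ k * ?E k (reward pol))" for n
  proof -
    have "?E n V \<le> 0"
      using V expectation_belief_dist_mono[OF pol b, of V "\<lambda>_. 0" n] by (simp add: admissible_def)
    then have "\<delta> ^ n * ?E n V \<le> 0"
      using discount_nonneg by (simp add: mult_nonneg_nonpos)
    moreover have "(\<Sum>k<n. \<delta> ^ k) \<le> 1 / (1 - \<delta>)"
      using discount_nonneg discount_less_1 by (simp add: sum_gp_strict divide_right_mono)
    then have "\<eta> * (\<Sum>k<n. \<delta> ^ k) \<le> \<eta> / (1 - \<delta>)"
      using \<open>0 \<le> \<eta>\<close> by (metis mult_left_mono times_divide_eq_right mult_1_right)
    ultimately show ?thesis
      using discounted_reward_sum_ge[OF pol b greedy, of n] by linarith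
  qed
  then show ?thesis
    unfolding V_pol_def
    by (intro LIMSEQ_le_const[OF summable_LIMSEQ[OF summable_discounted_reward[OF pol b]]]) auto
qed

lemma V_opt_le_value_iter:
  assumes "b \<in> {0..1}"
  shows "V_opt \<beta> C \<delta> b \<le> value_iter n b"
proof -
  have "(\<lambda>_. 1/2) \<in> policies"
    by (simp add: policies_def)
  then show ?thesis
    unfolding V_opt_def using V_pol_le_value_iter[OF _ assms] by (intro cSUP_least) auto
qed

lemma value_iter_le_V_opt:
  assumes b: "b \<in> {0..1}"
  shows "value_iter n b \<le> V_opt \<beta> C \<delta> b + \<delta> ^ n * value_bound / (1 - \<delta>)"
proof (rule field_le_epsilon)
  fix e :: real assume "0 < e"
  then obtain pol where pol: "pol \<in> policies"
    and greedy: "\<forall>x\<in>{0..1}. bellman (value_iter n) x - e * (1 - \<delta>) < qval (value_iter n) x (pol x)"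
    using greedy_policy_exists[OF value_iter_admissible, of "e * (1 - \<delta>)" n] discount_less_1 by auto
  have "value_iter n x - (e * (1 - \<delta>) + \<delta> ^ n * value_bound) \<le> qval (value_iter n) x (pol x)"
    if "x \<in> {0..1}" for x
    using greedy value_iter_le_Suc[OF that, of n] that by fastforce
  then have "value_iter n b - (e * (1 - \<delta>) + \<delta> ^ n * value_bound) / (1 - \<delta>) \<le> V_pol \<beta> C \<delta> pol b"
    using \<open>0 < e\<close> discount_nonneg discount_less_1 value_bound_pos
    by (intro V_pol_ge_of_qval_ge[OF pol b value_iter_admissible]) auto
  also have "\<dots> \<le> V_opt \<beta> C \<delta> b"
    unfolding V_opt_def using V_pol_le_value_iter[OF _ b, of _ 0] pol
    by (intro cSUP_upper bdd_aboveI2[of _ _ 0]) auto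
  finally show "value_iter n b \<le> V_opt \<beta> C \<delta> b + \<delta> ^ n * value_bound / (1 - \<delta>) + e"
    using discount_less_1 by (simp add: add_divide_distrib)
qed

lemma value_iter_LIMSEQ_V_opt:
  assumes "b \<in> {0..1}"
  shows "(\<lambda>n. value_iter n b) \<longlonglongrightarrow> V_opt \<beta> C \<delta> b"
proof (rule tendsto_sandwich)
  show "\<forall>\<^sub>F n in sequentially. V_opt \<beta> C \<delta> b \<le> value_iter n b"
    using V_opt_le_value_iter[OF assms] by simp
  show "\<forall>\<^sub>F n in sequentially. value_iter n b \<le> V_opt \<beta> C \<delta> b + \<delta> ^ n * value_bound / (1 - \<delta>)"
    using value_iter_le_V_opt[OF assms] by simp
  have "(\<lambda>n. V_opt \<beta> C \<delta> b + \<delta> ^ n * value_bound / (1 - \<delta>)) \<longlonglongrightarrow> V_opt \<beta> C \<delta> b + 0 * value_bound / (1 - \<delta>)"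
    using discount_nonneg discount_less_1 by (intro tendsto_intros LIMSEQ_realpow_zero) auto
  then show "(\<lambda>n. V_opt \<beta> C \<delta> b + \<delta> ^ n * value_bound / (1 - \<delta>)) \<longlonglongrightarrow> V_opt \<beta> C \<delta> b"
    by simp
qed simp

lemma V_opt_convex: "convex_on {0..1} (V_opt \<beta> C \<delta>)"
  by (auto intro: convex_on_LIMSEQ[OF value_iter_convex] value_iter_LIMSEQ_V_opt)

end

theorem theorem2:
  fixes \<beta> :: "real \<Rightarrow> real" and p C \<delta> :: real
  assumes "1/2 \<le> p" and "p < 1"
    and "C > 0"
    and "0 \<le> \<delta>" and "\<delta> < 1"
    and "\<forall>q\<in>{1/2..1}. 0 \<le> \<beta> q"
    and "mono_on {1/2..1} \<beta>"
    and "continuous_on {1/2..1} \<beta>"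
    and "concave_on {1/2..1} \<beta>"
    and "\<beta> p = 0"
  shows "convex_on {0..1} (V_opt \<beta> C \<delta>)"
proof -
  have cost_le_max: "\<beta> q \<le> \<beta> 1" if "q \<in> {1/2..1}" for q
    using mono_onD[OF assms(7)] that by auto
  have "\<beta> (1/2) \<le> \<beta> p" "0 \<le> \<beta> (1/2)"
    using mono_onD[OF assms(7), of "1/2" p] assms(1,2,6) by auto
  then have cost_half: "\<beta> (1/2) = 0"
    using assms(10) by simp
  interpret altruistic_planner \<beta> C \<delta>
    using assms cost_le_max cost_half by unfold_locales auto
  show ?thesis
    by (rule V_opt_convex)
qed

end
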